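(* Under the role-persistence and uniform-bound assumptions below, for any two initial states $\mathbf x,\mathbf y\in\{0,1\}^n$, let $\Pr(\mathbf X^t\mid\mathbf x)$ and $\Pr(\mathbf Y^t\mid\mathbf y)$ be the laws at time $t$ of the time-varying failure process started from $\mathbf X^0=\mathbf x$ and $\mathbf Y^0=\mathbf y$, respectively. Then for every $t\in\mathbb N$, $$d_{TV}\big(\Pr(\mathbf X^t\mid\mathbf x),\Pr(\mathbf Y^t\mid\mathbf y)\big)\le n\,\|\mathbf M_{t-1}\mathbf M_{t-2}\cdots\mathbf M_0\|,$$ where $\mathbf M_s=\mathbf A_s\mathbf W_s$ (the empty product for $t=0$ being $\mathbf I$), and consequently $$d_{TV}\big(\Pr(\mathbf X^t\mid\mathbf x),\Pr(\mathbf Y^t\mid\mathbf y)\big)\le n\,\bar\alpha^{\lfloor t/2\rfloor}.$$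
   Context: Fix a finite node set $\mathcal V$ with $n=|\mathcal V|$ and a sequence of directed graphs $G_t=(\mathcal V,\mathcal E_t)$, $t\in\mathbb N$. Let $\delta^t_{\mathrm{in}}(i)=\{j:(j,i)\in\mathcal E_t\}$. In $G_t$, a node $i$ is a pure obligee if it has no outgoing edge in $\mathcal E_t$, and a principal otherwise. For each $t$, $\mathbf W_t=(w^t_{ij})$ is an entrywise nonnegative $n\times n$ matrix with $w^t_{ij}>0$ only if $(j,i)\in\mathcal E_t$ and with every row sum at most $1$; $\mathbf A_t=\mathrm{diag}(\alpha_i^t)$ with $\alpha_i^t\in[0,1]$, and $\alpha_i^t=1$ whenever $i$ is a pure obligee in $G_t$. Each node has a fixed risk score $r_i\in[0,1]$. The time-varying failure process started at $\mathbf X^0$: for $t\ge0$, conditionally on $(\mathbf X^0,\dots,\mathbf X^t)$ the $X_i^{t+1}$, $i\in\mathcal V$, are independent with $X_i^{t+1}\sim\mathrm{Bernoulli}\big((1-\alpha_i^t)r_i+\alpha_i^t\sum_{j\in\delta^t_{\mathrm{in}}(i)}w^t_{ij}X_j^t\big)$. Role persistence: for every $i$ and $t$, $i$ is a pure obligee in $G_t$ if and only if it is a pure obligee in $G_{t+1}$. Uniform bound: there is $\bar\alpha\in(0,1)$ with $\alpha_i^t\le\bar\alpha$ for every $t$ and every node $i$ that is not a pure obligee in $G_t$. $d_{TV}(P,Q)=\max_{S\subseteq\{0,1\}^n}|P(S)-Q(S)|$; $\|\mathbf M\|$ is the induced $\ell_\infty$ matrix norm (maximum absolute row sum). *)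

theory Defs
  imports "HOL-Probability.Probability"
begin

text \<open>Nodes form a finite type 'v; a state in {0,1}^n is a function 'v \<Rightarrow> bool.
  Edge (j,i) in E t means an edge from j to i in G_t.\<close>

definition in_nbrs :: "(nat \<Rightarrow> ('v \<times> 'v) set) \<Rightarrow> nat \<Rightarrow> 'v \<Rightarrow> 'v set" where
  "in_nbrs E t i = {j. (j, i) \<in> E t}"

definition pure_obligee :: "(nat \<Rightarrow> ('v \<times> 'v) set) \<Rightarrow> nat \<Rightarrow> 'v \<Rightarrow> bool" where
  "pure_obligee E t i \<longleftrightarrow> \<not> (\<exists>k. (i, k) \<in> E t)"

definition fail_prob ::
  "(nat \<Rightarrow> ('v \<times> 'v) set) \<Rightarrow> (nat \<Rightarrow> 'v \<Rightarrow> 'v \<Rightarrow> real) \<Rightarrow> (nat \<Rightarrow> 'v \<Rightarrow> real)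
    \<Rightarrow> ('v \<Rightarrow> real) \<Rightarrow> nat \<Rightarrow> ('v \<Rightarrow> bool) \<Rightarrow> 'v \<Rightarrow> real" where
  "fail_prob E W \<alpha> r t x i =
     (1 - \<alpha> t i) * r i + \<alpha> t i * (\<Sum>j\<in>in_nbrs E t i. W t i j * of_bool (x j))"

definition step_kernel ::
  "(nat \<Rightarrow> ('v::finite \<times> 'v) set) \<Rightarrow> (nat \<Rightarrow> 'v \<Rightarrow> 'v \<Rightarrow> real) \<Rightarrow> (nat \<Rightarrow> 'v \<Rightarrow> real)
    \<Rightarrow> ('v \<Rightarrow> real) \<Rightarrow> nat \<Rightarrow> ('v \<Rightarrow> bool) \<Rightarrow> ('v \<Rightarrow> bool) pmf" where
  "step_kernel E W \<alpha> r t x =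
     Pi_pmf UNIV False (\<lambda>i. bernoulli_pmf (fail_prob E W \<alpha> r t x i))"

fun law ::
  "(nat \<Rightarrow> ('v::finite \<times> 'v) set) \<Rightarrow> (nat \<Rightarrow> 'v \<Rightarrow> 'v \<Rightarrow> real) \<Rightarrow> (nat \<Rightarrow> 'v \<Rightarrow> real)
    \<Rightarrow> ('v \<Rightarrow> real) \<Rightarrow> ('v \<Rightarrow> bool) \<Rightarrow> nat \<Rightarrow> ('v \<Rightarrow> bool) pmf" where
  "law E W \<alpha> r x0 0 = return_pmf x0"
| "law E W \<alpha> r x0 (Suc t) = bind_pmf (law E W \<alpha> r x0 t) (step_kernel E W \<alpha> r t)"

definition dTV :: "('s::finite) pmf \<Rightarrow> 's pmf \<Rightarrow> real" where
  "dTV P Q = Max (range (\<lambda>S. \<bar>measure_pmf.prob P S - measure_pmf.prob Q S\<bar>))"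

definition mat_mult :: "('v::finite \<Rightarrow> 'v \<Rightarrow> real) \<Rightarrow> ('v \<Rightarrow> 'v \<Rightarrow> real) \<Rightarrow> 'v \<Rightarrow> 'v \<Rightarrow> real" where
  "mat_mult A B i k = (\<Sum>j\<in>UNIV. A i j * B j k)"

definition mat_id :: "'v \<Rightarrow> 'v \<Rightarrow> real" where
  "mat_id i j = (if i = j then 1 else 0)"

text \<open>Induced l-infinity norm: maximum absolute row sum.\<close>
definition inf_norm :: "('v::finite \<Rightarrow> 'v \<Rightarrow> real) \<Rightarrow> real" where
  "inf_norm A = Max (range (\<lambda>i. \<Sum>j\<in>UNIV. \<bar>A i j\<bar>))"

definition Mmat :: "(nat \<Rightarrow> 'v \<Rightarrow> 'v \<Rightarrow> real) \<Rightarrow> (nat \<Rightarrow> 'v \<Rightarrow> real) \<Rightarrow> nat \<Rightarrow> 'v \<Rightarrow> 'v \<Rightarrow> real" where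
  "Mmat W \<alpha> s i j = \<alpha> s i * W s i j"

fun Mprod :: "(nat \<Rightarrow> 'v::finite \<Rightarrow> 'v \<Rightarrow> real) \<Rightarrow> (nat \<Rightarrow> 'v \<Rightarrow> real) \<Rightarrow> nat \<Rightarrow> 'v \<Rightarrow> 'v \<Rightarrow> real" where
  "Mprod W \<alpha> 0 = mat_id"
| "Mprod W \<alpha> (Suc t) = mat_mult (Mmat W \<alpha> t) (Mprod W \<alpha> t)"

end

theory Submission
  imports Defs
begin

(*
  Run two copies of the process jointly: in every step each node is updated in both copies
  through a maximal coupling of Bernoulli(p) and Bernoulli(q), which disagrees with probability
  |p - q|. For the failure probabilities of node i in states x and y,
  |p - q| <= sum_j (M_t)_ij [x_j ~= y_j], so the vector e_t of disagreement probabilities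
  satisfies e_(t+1) <= M_t e_t, whence e_t <= M_(t-1) ... M_0 1. The coupling inequality and a
  union bound over the nodes give d_TV <= sum_i e_t(i) <= n ||M_(t-1) ... M_0||.

  For the geometric bound, ||M_(s+1) M_s|| <= alphabar: a nonzero entry (M_(s+1))_ij comes from
  an edge (j, i) of G_(s+1), so j is a principal of G_(s+1), hence, by role persistence, of G_s,
  and row j of M_s sums to at most alphabar; the rows of M_(s+1) sum to at most 1.
*)

lemma measure_bind_pmf: "measure (bind_pmf M N) X = (\<integral>x. measure (N x) X \<partial>M)"
proof -
  have "ennreal (measure (bind_pmf M N) X) = (\<integral>\<^sup>+x. ennreal (measure (N x) X) \<partial>M)"
    using emeasure_bind_pmf[of M N X] by (simp add: measure_pmf.emeasure_eq_measure)
  also have "\<dots> = ennreal (\<integral>x. measure (N x) X \<partial>M)"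
    by (intro nn_integral_eq_integral measure_pmf.integrable_const_bound[where B=1]) auto
  finally show ?thesis by (simp add: integral_nonneg)
qed

lemma measure_le_measure_plus_disagreement:
  fixes C :: "'a pmf"
  shows "measure C {z. f z \<in> S} \<le> measure C {z. g z \<in> S} + measure C {z. f z \<noteq> g z}"
proof -
  have "measure C {z. f z \<in> S} \<le> measure C ({z. g z \<in> S} \<union> {z. f z \<noteq> g z})"
    by (intro measure_pmf.finite_measure_mono) auto
  also have "\<dots> \<le> measure C {z. g z \<in> S} + measure C {z. f z \<noteq> g z}"
    by (rule measure_Un_le) auto
  finally show ?thesis .
qed

lemma dTV_le_disagreement:
  fixes C :: "('s::finite \<times> 's) pmf"
  shows "dTV (map_pmf fst C) (map_pmf snd C) \<le> measure C {z. fst z \<noteq> snd z}"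
proof -
  have "\<bar>measure C {z. fst z \<in> S} - measure C {z. snd z \<in> S}\<bar> \<le> measure C {z. fst z \<noteq> snd z}"
    for S
    using measure_le_measure_plus_disagreement[of C fst S snd]
      measure_le_measure_plus_disagreement[of C snd S fst]
    by (simp add: eq_commute)
  then show ?thesis
    by (simp add: dTV_def vimage_def)
qed

lemma disagreement_le_sum_components:
  fixes C :: "(('i::finite \<Rightarrow> 'a) \<times> ('i \<Rightarrow> 'a)) pmf"
  shows "measure C {z. fst z \<noteq> snd z} \<le> (\<Sum>i\<in>UNIV. measure C {z. fst z i \<noteq> snd z i})"
proof -
  have "measure C {z. fst z \<noteq> snd z} = measure C (\<Union>i. {z. fst z i \<noteq> snd z i})"
    by (rule arg_cong[where f = "measure C"]) auto
  also have "\<dots> \<le> (\<Sum>i\<in>UNIV. measure C {z. fst z i \<noteq> snd z i})"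
    by (rule measure_pmf.finite_measure_subadditive_finite) auto
  finally show ?thesis .
qed

lemma pmf_bool_eqI:
  fixes M N :: "bool pmf"
  assumes "pmf M True = pmf N True"
  shows "M = N"
  using assms by (intro pmf_eqI) (metis (full_types) pmf_False_conv_True)

(* In the intended case p <= q, the junk value p / 0 = 0 is harmless: q = 0 forces p = 0. *)
definition bernoulli_thinning :: "real \<Rightarrow> real \<Rightarrow> (bool \<times> bool) pmf" where
  "bernoulli_thinning p q =
     map_pmf (\<lambda>(u, v). (u \<and> v, v)) (pair_pmf (bernoulli_pmf (p / q)) (bernoulli_pmf q))"

lemma bernoulli_thinning:
  assumes "0 \<le> p" "p \<le> q" "q \<le> 1"
  shows "map_pmf fst (bernoulli_thinning p q) = bernoulli_pmf p"
    and "map_pmf snd (bernoulli_thinning p q) = bernoulli_pmf q"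
    and "measure (bernoulli_thinning p q) {z. fst z \<noteq> snd z} = q - p"
proof -
  let ?P = "pair_pmf (bernoulli_pmf (p / q)) (bernoulli_pmf q)"
  have ratio: "0 \<le> p / q" "p / q \<le> 1" "p / q * q = p"
    using assms by (auto simp: divide_simps)
  have "{z. fst z \<and> snd z} = {(True, True)}"
    by auto
  then have "pmf (map_pmf fst (bernoulli_thinning p q)) True = pmf ?P (True, True)"
    unfolding bernoulli_thinning_def pmf_map
    by (simp add: vimage_def case_prod_beta measure_pmf_single)
  then show "map_pmf fst (bernoulli_thinning p q) = bernoulli_pmf p"
    using assms ratio by (intro pmf_bool_eqI) (simp add: pmf_pair)
  show "map_pmf snd (bernoulli_thinning p q) = bernoulli_pmf q"
    by (simp add: bernoulli_thinning_def pmf.map_comp o_def case_prod_beta map_snd_pair_pmf)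
  have "measure (bernoulli_thinning p q) {z. fst z \<noteq> snd z} = pmf ?P (False, True)"
    unfolding bernoulli_thinning_def measure_map_pmf
    by (subst measure_pmf_single[symmetric]) (rule arg_cong[where f = "measure _"], auto)
  also have "\<dots> = q - p"
    using assms ratio by (simp add: pmf_pair algebra_simps)
  finally show "measure (bernoulli_thinning p q) {z. fst z \<noteq> snd z} = q - p" .
qed

definition bernoulli_coupling :: "real \<Rightarrow> real \<Rightarrow> (bool \<times> bool) pmf" where
  "bernoulli_coupling p q =
     (if p \<le> q then bernoulli_thinning p q else map_pmf prod.swap (bernoulli_thinning q p))"

lemma bernoulli_coupling:
  assumes "0 \<le> p" "p \<le> 1" "0 \<le> q" "q \<le> 1"
  shows "map_pmf fst (bernoulli_coupling p q) = bernoulli_pmf p"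
    and "map_pmf snd (bernoulli_coupling p q) = bernoulli_pmf q"
    and "measure (bernoulli_coupling p q) {z. fst z \<noteq> snd z} = \<bar>p - q\<bar>"
proof -
  have swap_disagree: "prod.swap -` {z. fst z \<noteq> snd z} = {z :: bool \<times> bool. fst z \<noteq> snd z}"
    by auto
  show "map_pmf fst (bernoulli_coupling p q) = bernoulli_pmf p"
    "map_pmf snd (bernoulli_coupling p q) = bernoulli_pmf q"
    using assms bernoulli_thinning[of p q] bernoulli_thinning[of q p]
    by (auto simp: bernoulli_coupling_def pmf.map_comp o_def)
  show "measure (bernoulli_coupling p q) {z. fst z \<noteq> snd z} = \<bar>p - q\<bar>"
  proof (cases "p \<le> q")
    case True
    then show ?thesis
      using assms bernoulli_thinning(3)[of p q] by (simp add: bernoulli_coupling_def)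
  next
    case False
    then show ?thesis
      using assms bernoulli_thinning(3)[of q p]
      unfolding bernoulli_coupling_def if_not_P[OF False] measure_map_pmf swap_disagree by simp
  qed
qed

definition Pi_coupling ::
  "'i set \<Rightarrow> 'a \<times> 'b \<Rightarrow> ('i \<Rightarrow> ('a \<times> 'b) pmf) \<Rightarrow> (('i \<Rightarrow> 'a) \<times> ('i \<Rightarrow> 'b)) pmf" where
  "Pi_coupling A dflt C = map_pmf (\<lambda>f. (fst \<circ> f, snd \<circ> f)) (Pi_pmf A dflt C)"

lemma Pi_coupling:
  assumes "finite A"
  shows "map_pmf fst (Pi_coupling A dflt C) = Pi_pmf A (fst dflt) (\<lambda>i. map_pmf fst (C i))"
    and "map_pmf snd (Pi_coupling A dflt C) = Pi_pmf A (snd dflt) (\<lambda>i. map_pmf snd (C i))"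
    and "i \<in> A \<Longrightarrow>
      measure (Pi_coupling A dflt C) {z. fst z i \<noteq> snd z i} = measure (C i) {z. fst z \<noteq> snd z}"
proof -
  show "map_pmf fst (Pi_coupling A dflt C) = Pi_pmf A (fst dflt) (\<lambda>i. map_pmf fst (C i))"
    "map_pmf snd (Pi_coupling A dflt C) = Pi_pmf A (snd dflt) (\<lambda>i. map_pmf snd (C i))"
    using assms by (simp_all add: Pi_coupling_def pmf.map_comp o_def Pi_pmf_map[of A])
  assume "i \<in> A"
  have "measure (Pi_coupling A dflt C) {z. fst z i \<noteq> snd z i}
      = measure (map_pmf (\<lambda>f. f i) (Pi_pmf A dflt C)) {z. fst z \<noteq> snd z}"
    by (simp add: Pi_coupling_def vimage_def)
  also have "map_pmf (\<lambda>f. f i) (Pi_pmf A dflt C) = C i"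
    using assms \<open>i \<in> A\<close> by (simp add: Pi_pmf_component)
  finally show "measure (Pi_coupling A dflt C) {z. fst z i \<noteq> snd z i}
      = measure (C i) {z. fst z \<noteq> snd z}" .
qed

lemma row_abs_sum_le_inf_norm: "(\<Sum>k\<in>UNIV. \<bar>A i k\<bar>) \<le> inf_norm A"
  unfolding inf_norm_def by (intro Max_ge) auto

lemma row_sum_le_inf_norm: "(\<Sum>k\<in>UNIV. A i k) \<le> inf_norm A"
  by (rule order.trans[OF sum_mono[OF abs_ge_self] row_abs_sum_le_inf_norm])

lemma inf_norm_nonneg: "0 \<le> inf_norm A"
  by (rule order.trans[OF sum_nonneg[OF abs_ge_zero] row_abs_sum_le_inf_norm])

lemma inf_norm_le:
  assumes "\<And>i. (\<Sum>k\<in>UNIV. \<bar>A i k\<bar>) \<le> b"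
  shows "inf_norm A \<le> b"
  unfolding inf_norm_def using assms by (subst Max_le_iff) auto

lemma inf_norm_le_nonneg:
  assumes "\<And>i k. 0 \<le> A i k" and "\<And>i. (\<Sum>k\<in>UNIV. A i k) \<le> b"
  shows "inf_norm A \<le> b"
  using assms by (intro inf_norm_le) simp

lemma inf_norm_mat_id: "inf_norm (mat_id :: 'v::finite \<Rightarrow> 'v \<Rightarrow> real) = 1"
  unfolding inf_norm_def mat_id_def by (simp add: of_bool_def[symmetric])

lemma row_sum_mat_mult:
  "(\<Sum>k\<in>UNIV. mat_mult A B i k) = (\<Sum>j\<in>UNIV. A i j * (\<Sum>k\<in>UNIV. B j k))"
  unfolding mat_mult_def sum_distrib_left by (rule sum.swap)

lemma mat_mult_assoc: "mat_mult (mat_mult A B) C = mat_mult A (mat_mult B C)"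
  unfolding mat_mult_def
  by (intro ext) (simp add: sum_distrib_left sum_distrib_right mult.assoc, rule sum.swap)

lemma inf_norm_mat_mult_le: "inf_norm (mat_mult A B) \<le> inf_norm A * inf_norm B"
proof (rule inf_norm_le)
  fix i
  have "(\<Sum>k\<in>UNIV. \<bar>mat_mult A B i k\<bar>) \<le> (\<Sum>k\<in>UNIV. \<Sum>j\<in>UNIV. \<bar>A i j\<bar> * \<bar>B j k\<bar>)"
    unfolding mat_mult_def by (intro sum_mono order.trans[OF sum_abs]) (simp add: abs_mult)
  also have "\<dots> = (\<Sum>j\<in>UNIV. \<bar>A i j\<bar> * (\<Sum>k\<in>UNIV. \<bar>B j k\<bar>))"
    unfolding sum_distrib_left by (rule sum.swap)
  also have "\<dots> \<le> (\<Sum>j\<in>UNIV. \<bar>A i j\<bar> * inf_norm B)"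
    by (intro sum_mono mult_left_mono row_abs_sum_le_inf_norm) auto
  also have "\<dots> \<le> inf_norm A * inf_norm B"
    unfolding sum_distrib_right[symmetric]
    by (intro mult_right_mono row_abs_sum_le_inf_norm inf_norm_nonneg)
  finally show "(\<Sum>k\<in>UNIV. \<bar>mat_mult A B i k\<bar>) \<le> inf_norm A * inf_norm B" .
qed

lemma inf_norm_Mprod_le_power:
  assumes step: "\<And>s. inf_norm (Mmat W \<alpha> s) \<le> 1"
    and two_steps: "\<And>s. inf_norm (mat_mult (Mmat W \<alpha> (Suc s)) (Mmat W \<alpha> s)) \<le> c"
  shows "inf_norm (Mprod W \<alpha> t) \<le> c ^ (t div 2)"
proof (induction t rule: nat_induct2)
  case 0
  show ?case by (simp add: inf_norm_mat_id)
next
  case 1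
  show ?case
    using inf_norm_mat_mult_le[of "Mmat W \<alpha> 0" mat_id] step[of 0] by (simp add: inf_norm_mat_id)
next
  case (step n)
  have "c \<ge> 0"
    using two_steps[of 0] inf_norm_nonneg by (rule order.trans[rotated])
  have "Mprod W \<alpha> (n + 2) = mat_mult (mat_mult (Mmat W \<alpha> (Suc n)) (Mmat W \<alpha> n)) (Mprod W \<alpha> n)"
    by (simp add: mat_mult_assoc)
  then have "inf_norm (Mprod W \<alpha> (n + 2))
      \<le> inf_norm (mat_mult (Mmat W \<alpha> (Suc n)) (Mmat W \<alpha> n)) * inf_norm (Mprod W \<alpha> n)"
    by (simp only: inf_norm_mat_mult_le)
  also have "\<dots> \<le> c * inf_norm (Mprod W \<alpha> n)"
    by (intro mult_right_mono two_steps inf_norm_nonneg)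
  also have "\<dots> \<le> c * c ^ (n div 2)"
    using step.IH \<open>c \<ge> 0\<close> by (rule mult_left_mono)
  finally show ?case by simp
qed

locale failure_process =
  fixes E :: "nat \<Rightarrow> ('v::finite \<times> 'v) set"
    and W :: "nat \<Rightarrow> 'v \<Rightarrow> 'v \<Rightarrow> real"
    and \<alpha> :: "nat \<Rightarrow> 'v \<Rightarrow> real"
    and r :: "'v \<Rightarrow> real"
  assumes W_nonneg: "\<And>t i j. W t i j \<ge> 0"
    and W_rowsum: "\<And>t i. (\<Sum>j\<in>UNIV. W t i j) \<le> 1"
    and alpha_range: "\<And>t i. 0 \<le> \<alpha> t i \<and> \<alpha> t i \<le> 1"
    and r_range: "\<And>i. 0 \<le> r i \<and> r i \<le> 1"
begin

lemma Mmat_nonneg: "0 \<le> Mmat W \<alpha> t i j"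
  using W_nonneg alpha_range by (simp add: Mmat_def)

lemma row_sum_Mmat_le: "(\<Sum>j\<in>UNIV. Mmat W \<alpha> t i j) \<le> \<alpha> t i"
proof -
  have "(\<Sum>j\<in>UNIV. Mmat W \<alpha> t i j) = \<alpha> t i * (\<Sum>j\<in>UNIV. W t i j)"
    by (simp add: Mmat_def sum_distrib_left)
  also have "\<dots> \<le> \<alpha> t i"
    using alpha_range W_rowsum mult_left_le by blast
  finally show ?thesis .
qed

lemma inf_norm_Mmat_le_1: "inf_norm (Mmat W \<alpha> t) \<le> 1"
  using alpha_range by (intro inf_norm_le_nonneg Mmat_nonneg order.trans[OF row_sum_Mmat_le]) auto

lemma fail_prob_range: "0 \<le> fail_prob E W \<alpha> r t x i \<and> fail_prob E W \<alpha> r t x i \<le> 1"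
proof -
  let ?S = "\<Sum>j\<in>in_nbrs E t i. W t i j * of_bool (x j)"
  have "0 \<le> ?S"
    using W_nonneg by (intro sum_nonneg) auto
  have "?S \<le> (\<Sum>j\<in>UNIV. W t i j)"
    using W_nonneg by (intro order.trans[OF sum_mono sum_mono2]) auto
  then have "?S \<le> 1"
    using W_rowsum order.trans by blast
  have \<alpha>: "0 \<le> \<alpha> t i" "\<alpha> t i \<le> 1" and r: "0 \<le> r i" "r i \<le> 1"
    using alpha_range r_range by auto
  have "0 \<le> (1 - \<alpha> t i) * r i + \<alpha> t i * ?S"
    using \<alpha> r \<open>0 \<le> ?S\<close> by (intro add_nonneg_nonneg mult_nonneg_nonneg) simp_all
  moreover have "(1 - \<alpha> t i) * r i + \<alpha> t i * ?S \<le> (1 - \<alpha> t i) * 1 + \<alpha> t i * 1"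
    using \<alpha> r \<open>?S \<le> 1\<close> by (intro add_mono mult_left_mono) simp_all
  ultimately show ?thesis
    by (simp add: fail_prob_def)
qed

lemma fail_prob_diff_le:
  "\<bar>fail_prob E W \<alpha> r t x i - fail_prob E W \<alpha> r t y i\<bar>
     \<le> (\<Sum>j\<in>UNIV. Mmat W \<alpha> t i j * of_bool (x j \<noteq> y j))"
proof -
  have \<alpha>: "0 \<le> \<alpha> t i"
    using alpha_range by simp
  have "fail_prob E W \<alpha> r t x i - fail_prob E W \<alpha> r t y i
      = \<alpha> t i * (\<Sum>j\<in>in_nbrs E t i. W t i j * (of_bool (x j) - of_bool (y j)))"
    by (simp add: fail_prob_def algebra_simps sum_subtractf)
  then have "\<bar>fail_prob E W \<alpha> r t x i - fail_prob E W \<alpha> r t y i\<bar>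
      = \<alpha> t i * \<bar>\<Sum>j\<in>in_nbrs E t i. W t i j * (of_bool (x j) - of_bool (y j))\<bar>"
    using \<alpha> by (simp add: abs_mult)
  also have "\<dots> \<le> \<alpha> t i * (\<Sum>j\<in>in_nbrs E t i. W t i j * of_bool (x j \<noteq> y j))"
    using \<alpha> W_nonneg
    by (intro mult_left_mono order.trans[OF sum_abs] sum_mono) (auto simp: abs_mult)
  also have "\<dots> \<le> \<alpha> t i * (\<Sum>j\<in>UNIV. W t i j * of_bool (x j \<noteq> y j))"
    using \<alpha> W_nonneg by (intro mult_left_mono sum_mono2) auto
  also have "\<dots> = (\<Sum>j\<in>UNIV. Mmat W \<alpha> t i j * of_bool (x j \<noteq> y j))"
    by (simp only: Mmat_def sum_distrib_left mult.assoc)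
  finally show ?thesis .
qed

definition coupled_step :: "nat \<Rightarrow> ('v \<Rightarrow> bool) \<Rightarrow> ('v \<Rightarrow> bool) \<Rightarrow> (('v \<Rightarrow> bool) \<times> ('v \<Rightarrow> bool)) pmf"
  where "coupled_step t x y =
    Pi_coupling UNIV (False, False)
      (\<lambda>i. bernoulli_coupling (fail_prob E W \<alpha> r t x i) (fail_prob E W \<alpha> r t y i))"

lemma coupled_step:
  shows "map_pmf fst (coupled_step t x y) = step_kernel E W \<alpha> r t x"
    and "map_pmf snd (coupled_step t x y) = step_kernel E W \<alpha> r t y"
    and "measure (coupled_step t x y) {z. fst z i \<noteq> snd z i}
           = \<bar>fail_prob E W \<alpha> r t x i - fail_prob E W \<alpha> r t y i\<bar>"
proof -
  show "map_pmf fst (coupled_step t x y) = step_kernel E W \<alpha> r t x"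
    "map_pmf snd (coupled_step t x y) = step_kernel E W \<alpha> r t y"
    by (simp_all add: coupled_step_def step_kernel_def Pi_coupling bernoulli_coupling fail_prob_range)
  show "measure (coupled_step t x y) {z. fst z i \<noteq> snd z i}
      = \<bar>fail_prob E W \<alpha> r t x i - fail_prob E W \<alpha> r t y i\<bar>"
    unfolding coupled_step_def Pi_coupling(3)[OF finite UNIV_I]
    by (rule bernoulli_coupling(3)) (simp_all add: fail_prob_range)
qed

fun coupled_law :: "('v \<Rightarrow> bool) \<Rightarrow> ('v \<Rightarrow> bool) \<Rightarrow> nat \<Rightarrow> (('v \<Rightarrow> bool) \<times> ('v \<Rightarrow> bool)) pmf"
  where
    "coupled_law x y 0 = return_pmf (x, y)"
  | "coupled_law x y (Suc t) = bind_pmf (coupled_law x y t) (\<lambda>(x', y'). coupled_step t x' y')"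

lemma coupled_law_marginals:
  "map_pmf fst (coupled_law x y t) = law E W \<alpha> r x t \<and> map_pmf snd (coupled_law x y t) = law E W \<alpha> r y t"
proof (induction t)
  case 0
  show ?case by simp
next
  case (Suc t)
  then show ?case
    by (simp add: map_bind_pmf case_prod_beta coupled_step flip: bind_map_pmf)
qed

lemma coupled_law_disagreement_Suc:
  "measure (coupled_law x y (Suc t)) {z. fst z i \<noteq> snd z i}
     \<le> (\<Sum>j\<in>UNIV. Mmat W \<alpha> t i j * measure (coupled_law x y t) {z. fst z j \<noteq> snd z j})"
proof -
  let ?C = "coupled_law x y t"
  have "measure (coupled_law x y (Suc t)) {z. fst z i \<noteq> snd z i}
      = (\<integral>z. \<bar>fail_prob E W \<alpha> r t (fst z) i - fail_prob E W \<alpha> r t (snd z) i\<bar> \<partial>?C)"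
    unfolding coupled_law.simps measure_bind_pmf case_prod_beta
    by (intro Bochner_Integration.integral_cong refl coupled_step(3))
  also have "\<dots> \<le> (\<integral>z. (\<Sum>j\<in>UNIV. Mmat W \<alpha> t i j * indicator {z. fst z j \<noteq> snd z j} z) \<partial>?C)"
    unfolding indicator_def mem_Collect_eq
    by (intro integral_mono integrable_measure_pmf_finite fail_prob_diff_le finite)
  also have "\<dots> = (\<Sum>j\<in>UNIV. Mmat W \<alpha> t i j * measure ?C {z. fst z j \<noteq> snd z j})"
    by (subst Bochner_Integration.integral_sum) (simp_all add: integrable_measure_pmf_finite)
  finally show ?thesis .
qed

lemma coupled_law_disagreement_le_row_sum:
  "measure (coupled_law x y t) {z. fst z i \<noteq> snd z i} \<le> (\<Sum>k\<in>UNIV. Mprod W \<alpha> t i k)"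
proof (induction t arbitrary: i)
  case 0
  show ?case by (simp add: mat_id_def)
next
  case (Suc t)
  have "measure (coupled_law x y (Suc t)) {z. fst z i \<noteq> snd z i}
      \<le> (\<Sum>j\<in>UNIV. Mmat W \<alpha> t i j * measure (coupled_law x y t) {z. fst z j \<noteq> snd z j})"
    by (rule coupled_law_disagreement_Suc)
  also have "\<dots> \<le> (\<Sum>j\<in>UNIV. Mmat W \<alpha> t i j * (\<Sum>k\<in>UNIV. Mprod W \<alpha> t j k))"
    by (intro sum_mono mult_left_mono Suc.IH Mmat_nonneg)
  also have "\<dots> = (\<Sum>k\<in>UNIV. Mprod W \<alpha> (Suc t) i k)"
    by (simp add: row_sum_mat_mult)
  finally show ?case .
qed

lemma dTV_law_le: "dTV (law E W \<alpha> r x t) (law E W \<alpha> r y t) \<le> real CARD('v) * inf_norm (Mprod W \<alpha> t)"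
proof -
  let ?C = "coupled_law x y t"
  have "dTV (law E W \<alpha> r x t) (law E W \<alpha> r y t) \<le> measure ?C {z. fst z \<noteq> snd z}"
    using dTV_le_disagreement[of ?C] coupled_law_marginals by simp
  also have "\<dots> \<le> (\<Sum>i\<in>UNIV. measure ?C {z. fst z i \<noteq> snd z i})"
    by (rule disagreement_le_sum_components)
  also have "\<dots> \<le> (\<Sum>i\<in>(UNIV :: 'v set). inf_norm (Mprod W \<alpha> t))"
    by (intro sum_mono order.trans[OF coupled_law_disagreement_le_row_sum row_sum_le_inf_norm])
  finally show ?thesis by simp
qed

end

locale persistent_failure_process = failure_process +
  fixes \<alpha>bar :: real
  assumes W_support: "\<And>t i j. W t i j > 0 \<Longrightarrow> (j, i) \<in> E t"
    and role_persistence: "\<And>t i. pure_obligee E t i \<longleftrightarrow> pure_obligee E (Suc t) i"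
    and uniform_bound: "\<And>t i. \<not> pure_obligee E t i \<Longrightarrow> \<alpha> t i \<le> \<alpha>bar"
    and alphabar_nonneg: "0 \<le> \<alpha>bar"
begin

lemma Mmat_nonzero_imp_principal:
  assumes "Mmat W \<alpha> t i j \<noteq> 0"
  shows "\<not> pure_obligee E t j"
proof -
  have "W t i j > 0"
    using assms W_nonneg[of t i j] by (auto simp: Mmat_def order.strict_iff_order)
  then show ?thesis
    using W_support by (auto simp: pure_obligee_def)
qed

lemma row_sum_Mmat_principal_le:
  assumes "\<not> pure_obligee E t i"
  shows "(\<Sum>j\<in>UNIV. Mmat W \<alpha> t i j) \<le> \<alpha>bar"
  using row_sum_Mmat_le uniform_bound[OF assms] by (rule order.trans)

lemma inf_norm_Mmat_Suc_Mmat_le: "inf_norm (mat_mult (Mmat W \<alpha> (Suc t)) (Mmat W \<alpha> t)) \<le> \<alpha>bar"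
proof (rule inf_norm_le_nonneg)
  let ?M1 = "Mmat W \<alpha> (Suc t)" and ?M0 = "Mmat W \<alpha> t"
  show "0 \<le> mat_mult ?M1 ?M0 i k" for i k
    unfolding mat_mult_def by (intro sum_nonneg mult_nonneg_nonneg Mmat_nonneg)
  fix i
  have "?M1 i j * (\<Sum>k\<in>UNIV. ?M0 j k) \<le> ?M1 i j * \<alpha>bar" for j
  proof (cases "?M1 i j = 0")
    case False
    then have "\<not> pure_obligee E t j"
      using Mmat_nonzero_imp_principal role_persistence by blast
    then show ?thesis
      by (intro mult_left_mono row_sum_Mmat_principal_le Mmat_nonneg)
  qed simp
  then have "(\<Sum>k\<in>UNIV. mat_mult ?M1 ?M0 i k) \<le> (\<Sum>j\<in>UNIV. ?M1 i j) * \<alpha>bar"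
    unfolding row_sum_mat_mult sum_distrib_right by (rule sum_mono)
  also have "\<dots> \<le> 1 * \<alpha>bar"
    using alpha_range alphabar_nonneg
    by (intro mult_right_mono order.trans[OF row_sum_Mmat_le]) auto
  finally show "(\<Sum>k\<in>UNIV. mat_mult ?M1 ?M0 i k) \<le> \<alpha>bar"
    by simp
qed

lemma inf_norm_Mprod_le: "inf_norm (Mprod W \<alpha> t) \<le> \<alpha>bar ^ (t div 2)"
  using inf_norm_Mmat_le_1 inf_norm_Mmat_Suc_Mmat_le by (rule inf_norm_Mprod_le_power)

end

theorem mainTheorem14:
  fixes E :: "nat \<Rightarrow> ('v::finite \<times> 'v) set"
    and W :: "nat \<Rightarrow> 'v \<Rightarrow> 'v \<Rightarrow> real"
    and \<alpha> :: "nat \<Rightarrow> 'v \<Rightarrow> real"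
    and r :: "'v \<Rightarrow> real"
    and \<alpha>bar :: real
    and x y :: "'v \<Rightarrow> bool"
    and t :: nat
  assumes W_nonneg: "\<And>t i j. W t i j \<ge> 0"
    and W_support: "\<And>t i j. W t i j > 0 \<Longrightarrow> (j, i) \<in> E t"
    and W_rowsum: "\<And>t i. (\<Sum>j\<in>UNIV. W t i j) \<le> 1"
    and alpha_range: "\<And>t i. 0 \<le> \<alpha> t i \<and> \<alpha> t i \<le> 1"
    and alpha_obligee: "\<And>t i. pure_obligee E t i \<Longrightarrow> \<alpha> t i = 1"
    and r_range: "\<And>i. 0 \<le> r i \<and> r i \<le> 1"
    and role_persistence: "\<And>t i. pure_obligee E t i \<longleftrightarrow> pure_obligee E (Suc t) i"
    and alphabar_range: "0 < \<alpha>bar" "\<alpha>bar < 1"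
    and uniform_bound: "\<And>t i. \<not> pure_obligee E t i \<Longrightarrow> \<alpha> t i \<le> \<alpha>bar"
  shows "dTV (law E W \<alpha> r x t) (law E W \<alpha> r y t)
           \<le> real CARD('v) * inf_norm (Mprod W \<alpha> t)
       \<and> dTV (law E W \<alpha> r x t) (law E W \<alpha> r y t)
           \<le> real CARD('v) * \<alpha>bar ^ (t div 2)"
proof -
  interpret persistent_failure_process E W \<alpha> r \<alpha>bar
    using W_nonneg W_rowsum alpha_range r_range W_support role_persistence uniform_bound
      alphabar_range(1)
    by unfold_locales auto
  have "real CARD('v) * inf_norm (Mprod W \<alpha> t) \<le> real CARD('v) * \<alpha>bar ^ (t div 2)"
    using inf_norm_Mprod_le by (rule mult_left_mono) simp
  then show ?thesis
    using dTV_law_le[of x t y] by linarith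
qed

end
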